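(* For generic $x_0,x_1,\dots,x_L$, the six-vertex partition function with domain-wall boundaries satisfies, for every $0\le m\le L$, \[ \sum_{i=0}^L\rho_i^{(m)}\,Z(X_i^0)=0, \] where $X_0^0:=X$ and \[ \rho_i^{(m)}=\begin{cases}\dfrac{c(x_m-x_0)}{b(x_m-x_0)}\displaystyle\prod_{k=1}^Lb(x_0-\mu_k)\prod_{\substack{k=1\\k\ne m}}^L\frac{a(x_0-x_k)}{b(x_0-x_k)} & i=0,\ m\ne0,\\[2ex] \displaystyle\prod_{k=1}^La(x_m-\mu_k)-\prod_{k=1}^Lb(x_m-\mu_k)\prod_{\substack{k=0\\k\ne m}}^L\frac{a(x_m-x_k)}{b(x_m-x_k)} & i=m,\\[2ex] \dfrac{c(x_m-x_i)}{b(x_m-x_i)}\displaystyle\prod_{k=1}^Lb(x_i-\mu_k)\prod_{\substack{k=0\\k\ne i,m}}^L\frac{a(x_i-x_k)}{b(x_i-x_k)} & \text{otherwise.}\end{cases} \]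
   Context: Six-vertex setup. Fix $\gamma\in\mathbb C$, $L\ge1$ and $\mu_1,\dots,\mu_L\in\mathbb C$. Let $a(x)=\sinh(x+\gamma)$, $b(x)=\sinh x$, $c(x)=\sinh\gamma$ (constant). With $v_1,v_2$ the standard basis of $\mathbb C^2$, let $R(x)$ be the matrix on $\mathbb C^2\otimes\mathbb C^2$ which in the ordered basis $v_1\otimes v_1,v_1\otimes v_2,v_2\otimes v_1,v_2\otimes v_2$ is $\begin{pmatrix}a(x)&0&0&0\\0&b(x)&c(x)&0\\0&c(x)&b(x)&0\\0&0&0&a(x)\end{pmatrix}$. On $\mathbb C^2_0\otimes(\mathbb C^2)^{\otimes L}$, let $T_0(x)=R_{01}(x-\mu_1)R_{02}(x-\mu_2)\cdots R_{0L}(x-\mu_L)$ (with $R_{0i}$ acting on the auxiliary factor $0$ and quantum factor $i$), written in the auxiliary space as $\begin{pmatrix}A(x)&B(x)\\C(x)&D(x)\end{pmatrix}$. With $|0\rangle=v_1^{\otimes L}$ and $\langle\bar0|=(v_2^* )^{\otimes L}$, the partition function of the six-vertex model with domain-wall boundaries is $Z(x_1,\dots,x_L)=\langle\bar0|B(x_1)B(x_2)\cdots B(x_L)|0\rangle$. Notation: $X=(x_1,\dots,x_L)$; for $1\le i\le L$, $X_i^0$ is $X$ with $x_i$ replaced by $x_0$. *)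

theory Defs
  imports Complex_Main
begin

definition wa :: "complex \<Rightarrow> complex \<Rightarrow> complex" where "wa \<gamma> x = sinh (x + \<gamma>)"
definition wb :: "complex \<Rightarrow> complex" where "wb x = sinh x"
definition wc :: "complex \<Rightarrow> complex \<Rightarrow> complex" where "wc \<gamma> x = sinh \<gamma>"

text \<open>Basis of C^2: False = v1, True = v2.
  Rmat g x a i b j is the matrix entry of R(x) in row v_a (x) v_i, column v_b (x) v_j
  (first factor auxiliary, second quantum).\<close>
definition Rmat :: "complex \<Rightarrow> complex \<Rightarrow> bool \<Rightarrow> bool \<Rightarrow> bool \<Rightarrow> bool \<Rightarrow> complex" where
  "Rmat g x a i b j =
     (if a = i \<and> b = j \<and> a = b then wa g x
      else if a \<noteq> i \<and> a = b \<and> i = j then wb x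
      else if a \<noteq> i \<and> a = j \<and> i = b then wc g x
      else 0)"

text \<open>Monodromy matrix on n sites: mono g mu x n al be s s' is the matrix element
  of the auxiliary (al,be) entry of R_01(x-mu 1) ... R_0n(x-mu n), between quantum basis states
  s (row) and s' (column), given as lists of length n (site k = k-th list entry).\<close>
fun mono :: "complex \<Rightarrow> (nat \<Rightarrow> complex) \<Rightarrow> complex \<Rightarrow> nat \<Rightarrow> bool \<Rightarrow> bool \<Rightarrow> bool list \<Rightarrow> bool list \<Rightarrow> complex" where
  "mono g mu x 0 al be s s' = (if al = be \<and> s = [] \<and> s' = [] then 1 else 0)"
| "mono g mu x (Suc n) al be s s' =
     (if length s = Suc n \<and> length s' = Suc n then
        (\<Sum>c\<in>(UNIV::bool set). mono g mu x n al c (butlast s) (butlast s')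
                                * Rmat g (x - mu (Suc n)) c (last s) be (last s'))
      else 0)"

definition Bop :: "complex \<Rightarrow> (nat \<Rightarrow> complex) \<Rightarrow> nat \<Rightarrow> complex \<Rightarrow> bool list \<Rightarrow> bool list \<Rightarrow> complex" where
  "Bop g mu L x = mono g mu x L False True"

fun Bprod :: "complex \<Rightarrow> (nat \<Rightarrow> complex) \<Rightarrow> nat \<Rightarrow> complex list \<Rightarrow> bool list \<Rightarrow> bool list \<Rightarrow> complex" where
  "Bprod g mu L [] s s' = (if s = s' then 1 else 0)"
| "Bprod g mu L (y # ys) s s' =
     (\<Sum>t\<in>{t. length t = L}. Bop g mu L y s t * Bprod g mu L ys t s')"

text \<open>Domain-wall partition function Z(y_1,...,y_L) = <0bar| B(y_1)...B(y_L) |0>,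
  with |0> = v1^{(x)L}, <0bar| = (v2^* )^{(x)L}.\<close>
definition Zdw :: "complex \<Rightarrow> (nat \<Rightarrow> complex) \<Rightarrow> nat \<Rightarrow> complex list \<Rightarrow> complex" where
  "Zdw g mu L ys = Bprod g mu L ys (replicate L True) (replicate L False)"

text \<open>Coefficients rho_i^(m); x is indexed by 0..L.\<close>
definition rho :: "complex \<Rightarrow> (nat \<Rightarrow> complex) \<Rightarrow> nat \<Rightarrow> (nat \<Rightarrow> complex) \<Rightarrow> nat \<Rightarrow> nat \<Rightarrow> complex" where
  "rho g mu L x m i =
    (if i = 0 \<and> m \<noteq> 0 then
       wc g (x m - x 0) / wb (x m - x 0) * (\<Prod>k=1..L. wb (x 0 - mu k))
       * (\<Prod>k\<in>{1..L} - {m}. wa g (x 0 - x k) / wb (x 0 - x k))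
     else if i = m then
       (\<Prod>k=1..L. wa g (x m - mu k))
       - (\<Prod>k=1..L. wb (x m - mu k)) * (\<Prod>k\<in>{0..L} - {m}. wa g (x m - x k) / wb (x m - x k))
     else
       wc g (x m - x i) / wb (x m - x i) * (\<Prod>k=1..L. wb (x i - mu k))
       * (\<Prod>k\<in>{0..L} - {i, m}. wa g (x i - x k) / wb (x i - x k)))"

end

theory Submission
  imports Defs "HOL-Library.Multiset"
begin

text \<open>Evaluate \<open>\<langle>0\<^sup>*| \<Prod>\<^sub>k\<^sub>\<noteq>\<^sub>m B(x\<^sub>k) A(x\<^sub>m) |0\<rangle>\<close>, where \<open>\<langle>0\<^sup>*|\<close> is the dual vacuum, in two ways.
  Since \<open>A(z)|0\<rangle> = \<Prod>\<^sub>k a(z - \<mu>\<^sub>k) |0\<rangle>\<close>, it equals \<open>\<Prod>\<^sub>k a(x\<^sub>m - \<mu>\<^sub>k) Z(X\<^sub>m\<^sup>0)\<close>; the order of the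
  \<open>B\<close>'s does not matter because they commute. On the other hand, the exchange relation
  \<open>B(y) A(z) = a(z-y)/b(z-y) A(z) B(y) - c(z-y)/b(z-y) A(y) B(z)\<close>, a component of the RTT relation
  that follows from the Yang-Baxter equation, moves \<open>A\<close> to the left, where
  \<open>\<langle>0\<^sup>*| A(z) = \<Prod>\<^sub>k b(z - \<mu>\<^sub>k) \<langle>0\<^sup>*|\<close>. This produces \<open>Z(X\<^sub>m\<^sup>0)\<close> with the "wanted" coefficient and
  every \<open>Z(X\<^sub>i\<^sup>0)\<close>, \<open>i \<noteq> m\<close>, with an "unwanted" one; comparing the two evaluations gives exactly
  \<open>\<Sum>\<^sub>i \<rho>\<^sub>i\<^sup>(\<^sup>m\<^sup>) Z(X\<^sub>i\<^sup>0) = 0\<close>.\<close>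

abbreviation Aop :: "complex \<Rightarrow> (nat \<Rightarrow> complex) \<Rightarrow> nat \<Rightarrow> complex \<Rightarrow> bool list \<Rightarrow> bool list \<Rightarrow> complex" where
  "Aop g mu n x \<equiv> mono g mu x n False False"

lemma sinh_eq_exp: "sinh (w::complex) = (exp w - inverse (exp w)) / 2"
  by (simp add: sinh_field_def exp_minus)

lemma Rmat_Yang_Baxter:
  fixes x y m :: complex
  shows "(\<Sum>d\<in>UNIV. \<Sum>d'\<in>UNIV. Rmat g (x-y) e e' d d' * (\<Sum>z\<in>UNIV. Rmat g (x-m) d i b z * Rmat g (y-m) d' z b' j))
       = (\<Sum>f\<in>UNIV. \<Sum>f'\<in>UNIV. (\<Sum>z\<in>UNIV. Rmat g (y-m) e' i f' z * Rmat g (x-m) e z f j) * Rmat g (x-y) f f' b b')"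
proof -
  have "exp x \<noteq> 0" "exp y \<noteq> 0" "exp m \<noteq> 0" "exp g \<noteq> 0" by auto
  then show ?thesis
    unfolding UNIV_bool Rmat_def wa_def wb_def wc_def
    by (cases e; cases e'; cases b; cases b'; cases i; cases j)
       (simp_all add: sinh_eq_exp exp_add exp_diff field_simps)
qed

definition basis_states :: "nat \<Rightarrow> bool list set" where
  "basis_states n = {t. length t = n}"

lemma finite_basis_states [simp]: "finite (basis_states n)"
  using finite_lists_length_eq[of "UNIV::bool set" n] by (simp add: basis_states_def)

lemma basis_states_0: "basis_states 0 = {[]}"
  by (auto simp: basis_states_def)

lemma sum_basis_states_Suc:
  "(\<Sum>t\<in>basis_states (Suc n). f t) = (\<Sum>t\<in>basis_states n. \<Sum>z\<in>UNIV. f (t @ [z]))"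
proof -
  have "basis_states (Suc n) = (\<lambda>(t, z). t @ [z]) ` (basis_states n \<times> UNIV)"
  proof (intro equalityI subsetI)
    fix t assume "t \<in> basis_states (Suc n)"
    then have "t = butlast t @ [last t]" "butlast t \<in> basis_states n"
      by (auto simp: basis_states_def intro!: append_butlast_last_id[symmetric])
    then show "t \<in> (\<lambda>(t, z). t @ [z]) ` (basis_states n \<times> UNIV)"
      by (metis (no_types, lifting) SigmaI UNIV_I case_prod_conv image_eqI)
  qed (auto simp: basis_states_def)
  moreover have "inj_on (\<lambda>(t, z). t @ [z]) (basis_states n \<times> (UNIV::bool set))"
    by (auto simp: inj_on_def)
  ultimately show ?thesis
    by (simp add: sum.reindex sum.cartesian_product split_def)
qed

lemma mono_nonzero_length: "mono g mu x n a b s s' \<noteq> 0 \<Longrightarrow> length s = n \<and> length s' = n"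
  by (cases n) (auto split: if_splits)

definition mat_mult :: "nat \<Rightarrow> (bool list \<Rightarrow> bool list \<Rightarrow> complex) \<Rightarrow> (bool list \<Rightarrow> bool list \<Rightarrow> complex)
    \<Rightarrow> bool list \<Rightarrow> bool list \<Rightarrow> complex" where
  "mat_mult n P Q s s' = (\<Sum>t\<in>basis_states n. P s t * Q t s')"

lemma mat_mult_mono_eq_0:
  "length s \<noteq> n \<or> length s' \<noteq> n \<Longrightarrow> mat_mult n (mono g mu x n a b) (mono g mu y n a' b') s s' = 0"
  unfolding mat_mult_def
  by (rule sum.neutral) (use mono_nonzero_length in fastforce)

lemma mat_mult_mono_Suc:
  assumes "length s = Suc n" "length s' = Suc n"
  shows "mat_mult (Suc n) (mono g mu x (Suc n) a b) (mono g mu y (Suc n) a' b') s s' =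
    (\<Sum>d\<in>UNIV. \<Sum>d'\<in>UNIV. mat_mult n (mono g mu x n a d) (mono g mu y n a' d') (butlast s) (butlast s') *
       (\<Sum>z\<in>UNIV. Rmat g (x - mu (Suc n)) d (last s) b z * Rmat g (y - mu (Suc n)) d' z b' (last s')))"
  using assms unfolding mat_mult_def sum_basis_states_Suc
  by (simp add: basis_states_def UNIV_bool sum.distrib sum_distrib_left sum_distrib_right algebra_simps)

text \<open>The RTT relation \<open>R\<^sub>0\<^sub>0\<^sub>'(x - y) T\<^sub>0(x) T\<^sub>0\<^sub>'(y) = T\<^sub>0\<^sub>'(y) T\<^sub>0(x) R\<^sub>0\<^sub>0\<^sub>'(x - y)\<close>, entrywise in
  the two auxiliary spaces; each added site is one application of the Yang-Baxter equation.\<close>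
lemma mono_RTT:
  "(\<Sum>c\<in>UNIV. \<Sum>c'\<in>UNIV. Rmat g (x - y) a a' c c' * mat_mult n (mono g mu x n c b) (mono g mu y n c' b') s s')
 = (\<Sum>c\<in>UNIV. \<Sum>c'\<in>UNIV. mat_mult n (mono g mu y n a' c') (mono g mu x n a c) s s' * Rmat g (x - y) c c' b b')"
proof (induction n arbitrary: a a' b b' s s')
  case 0
  show ?case unfolding mat_mult_def basis_states_0 by (simp add: UNIV_bool Rmat_def)
next
  case (Suc n)
  show ?case
  proof (cases "length s = Suc n \<and> length s' = Suc n")
    case False
    then show ?thesis by (simp del: mono.simps add: mat_mult_mono_eq_0)
  next
    case True
    define m where "m = mu (Suc n)"
    define M where "M u c d v c' d' = mat_mult n (mono g mu u n c d) (mono g mu v n c' d') (butlast s) (butlast s')"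
      for u c d v c' d'
    define RR where "RR u d b v d' b' = (\<Sum>z\<in>UNIV. Rmat g (u-m) d (last s) b z * Rmat g (v-m) d' z b' (last s'))"
      for u d b v d' b'
    have "(\<Sum>c\<in>UNIV. \<Sum>c'\<in>UNIV. Rmat g (x - y) a a' c c' * mat_mult (Suc n) (mono g mu x (Suc n) c b) (mono g mu y (Suc n) c' b') s s')
      = (\<Sum>d\<in>UNIV. \<Sum>d'\<in>UNIV. (\<Sum>c\<in>UNIV. \<Sum>c'\<in>UNIV. Rmat g (x - y) a a' c c' * M x c d y c' d') * RR x d b y d' b')"
      by (simp add: mat_mult_mono_Suc True M_def RR_def m_def UNIV_bool algebra_simps)
    also have "\<dots> = (\<Sum>c\<in>UNIV. \<Sum>c'\<in>UNIV. M y a' c' x a c * (\<Sum>d\<in>UNIV. \<Sum>d'\<in>UNIV. Rmat g (x - y) c c' d d' * RR x d b y d' b'))"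
      unfolding M_def Suc.IH by (simp add: UNIV_bool algebra_simps)
    also have "\<dots> = (\<Sum>f\<in>UNIV. \<Sum>f'\<in>UNIV. (\<Sum>c\<in>UNIV. \<Sum>c'\<in>UNIV. M y a' c' x a c * RR y c' f' x c f) * Rmat g (x - y) f f' b b')"
      unfolding RR_def Rmat_Yang_Baxter by (simp add: UNIV_bool algebra_simps)
    also have "\<dots> = (\<Sum>c\<in>UNIV. \<Sum>c'\<in>UNIV. mat_mult (Suc n) (mono g mu y (Suc n) a' c') (mono g mu x (Suc n) a c) s s' * Rmat g (x - y) c c' b b')"
      by (simp add: mat_mult_mono_Suc True M_def RR_def m_def UNIV_bool algebra_simps)
    finally show ?thesis .
  qed
qed

lemma A_B_RTT:
  "wa g (x-y) * mat_mult n (Aop g mu n x) (Bop g mu n y) s s'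
   = wb (x-y) * mat_mult n (Bop g mu n y) (Aop g mu n x) s s'
   + wc g (x-y) * mat_mult n (Aop g mu n y) (Bop g mu n x) s s'"
  using mono_RTT[of g x y False False n mu False True s s']
  by (simp add: Bop_def UNIV_bool Rmat_def algebra_simps)

lemma B_B_RTT:
  "wa g (x-y) * mat_mult n (Bop g mu n x) (Bop g mu n y) s s'
   = wa g (x-y) * mat_mult n (Bop g mu n y) (Bop g mu n x) s s'"
  using mono_RTT[of g x y False False n mu True True s s']
  by (simp add: Bop_def UNIV_bool Rmat_def algebra_simps)

lemma continuous_on_mono: "continuous_on UNIV (\<lambda>x. mono g mu x n a b s s')"
proof (induction n arbitrary: a b s s')
  case (Suc n)
  have Rmat: "continuous_on UNIV (\<lambda>x. Rmat g (x - m) a i b j)" for m a i b j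
    by (cases a; cases i; cases b; cases j)
       (auto simp: Rmat_def wa_def wb_def wc_def intro!: continuous_intros)
  show ?case
  proof (cases "length s = Suc n \<and> length s' = Suc n")
    case True
    then show ?thesis by (simp del: mono.simps(1)) (intro continuous_intros Suc.IH Rmat)
  next
    case False
    then show ?thesis by (simp only: mono.simps if_False continuous_on_const)
  qed
qed simp

lemma continuous_on_mat_mult_mono:
  "continuous_on UNIV (\<lambda>x. mat_mult n (mono g mu (f x) n a b) (mono g mu (h x) n a' b') s s')"
  if "continuous_on UNIV f" "continuous_on UNIV h"
  unfolding mat_mult_def
  by (intro continuous_intros continuous_on_compose2[OF continuous_on_mono] that) auto

text \<open>Two zeros of \<open>sinh\<close> differ by a zero of \<open>sinh\<close>, and \<open>sinh\<close> has no real zero but \<open>0\<close>;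
  so at most one point of the sequence \<open>w + 1/(k+1)\<close> is a zero.\<close>
lemma eventually_sinh_nonzero:
  fixes w :: complex
  shows "eventually (\<lambda>k. sinh (w + of_real (1 / real (Suc k))) \<noteq> 0) sequentially"
proof (cases "\<exists>N. sinh (w + of_real (1 / real (Suc N))) = 0")
  case True
  then obtain N where N: "sinh (w + of_real (1 / real (Suc N))) = 0" by blast
  have "k = N" if "sinh (w + of_real (1 / real (Suc k))) = 0" for k
  proof -
    define r where "r = 1 / real (Suc k) - 1 / real (Suc N)"
    have "sinh (complex_of_real r) = 0"
      using sinh_diff[of "w + of_real (1 / real (Suc k))" "w + of_real (1 / real (Suc N))"] that N
      by (simp add: r_def)
    then have "complex_of_real (sinh r) = 0"
      by (simp add: sinh_field_def exp_of_real flip: of_real_minus)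
    then show ?thesis by (simp add: r_def)
  qed
  then show ?thesis
    unfolding eventually_sequentially by (intro exI[of _ "Suc N"]) fastforce
qed simp

lemma continuous_vanishing_off_sinh_zeros:
  fixes F :: "complex \<Rightarrow> complex"
  assumes "continuous_on UNIV F" "\<And>w. sinh (w + c) \<noteq> 0 \<Longrightarrow> F w = 0"
  shows "F w = 0"
proof -
  define ws where "ws k = w + of_real (1 / real (Suc k))" for k
  have "(\<lambda>k. 1 / real (Suc k)) \<longlonglongrightarrow> 0"
    by (rule LIMSEQ_inverse_real_of_nat[unfolded inverse_eq_divide])
  then have "(\<lambda>k. complex_of_real (1 / real (Suc k))) \<longlonglongrightarrow> 0"
    by (metis tendsto_of_real of_real_0)
  then have "ws \<longlonglongrightarrow> w"
    unfolding ws_def using tendsto_add[OF tendsto_const[of w]] by fastforce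
  then have "(\<lambda>k. F (ws k)) \<longlonglongrightarrow> F w"
    by (rule continuous_on_tendsto_compose[OF assms(1)]) auto
  moreover have "eventually (\<lambda>k. F (ws k) = 0) sequentially"
    using eventually_sinh_nonzero[of "w + c"]
    by (rule eventually_mono) (rule assms(2), simp add: ws_def add_ac)
  then have "(\<lambda>k. F (ws k)) \<longlonglongrightarrow> 0"
    by (rule tendsto_eventually)
  ultimately show ?thesis
    by (rule LIMSEQ_unique)
qed

text \<open>\<open>B_B_RTT\<close> gives \<open>[B(x), B(y)] = 0\<close> only where \<open>a(x - y) \<noteq> 0\<close>; continuity in \<open>x\<close> removes
  the exceptional points.\<close>
lemma B_commute:
  "mat_mult n (Bop g mu n x) (Bop g mu n y) s s' = mat_mult n (Bop g mu n y) (Bop g mu n x) s s'"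
proof -
  define F where "F x = mat_mult n (Bop g mu n x) (Bop g mu n y) s s'
    - mat_mult n (Bop g mu n y) (Bop g mu n x) s s'" for x
  have "continuous_on UNIV F"
    unfolding F_def Bop_def by (intro continuous_intros continuous_on_mat_mult_mono)
  moreover have "F x = 0" if "sinh (x + (g - y)) \<noteq> 0" for x
    using that B_B_RTT[of g x y n mu s s'] by (simp add: F_def wa_def algebra_simps)
  ultimately have "F x = 0" by (rule continuous_vanishing_off_sinh_zeros)
  then show ?thesis by (simp add: F_def)
qed

lemma B_A_exchange:
  assumes "wb (z - y) \<noteq> 0"
  shows "mat_mult n (Bop g mu n y) (Aop g mu n z) s s'
    = wa g (z-y) / wb (z-y) * mat_mult n (Aop g mu n z) (Bop g mu n y) s s'
    - wc g (z-y) / wb (z-y) * mat_mult n (Aop g mu n y) (Bop g mu n z) s s'"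
  using A_B_RTT[of g z y n mu s s'] assms by (simp add: field_simps)

lemma mat_mult_assoc: "mat_mult n (mat_mult n P Q) R = mat_mult n P (mat_mult n Q R)"
  unfolding mat_mult_def
  by (intro ext) (simp add: sum_distrib_left sum_distrib_right mult.assoc, rule sum.swap)

lemma mat_mult_delta_right:
  "mat_mult n P (\<lambda>s s'. if s = s' then 1 else 0) s s' = (if length s' = n then P s s' else 0)"
  unfolding mat_mult_def
  by (simp add: if_distrib[of "(*) _"] sum.delta' cong: if_cong) (simp add: basis_states_def)

lemma mat_mult_delta_left:
  "mat_mult n (\<lambda>s s'. if s = s' then 1 else 0) Q s s' = (if length s = n then Q s s' else 0)"
  unfolding mat_mult_def
  by (simp add: if_distrib[of "\<lambda>c. c * _"] sum.delta cong: if_cong) (simp add: basis_states_def)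

definition vec_mult :: "nat \<Rightarrow> (bool list \<Rightarrow> complex) \<Rightarrow> (bool list \<Rightarrow> bool list \<Rightarrow> complex) \<Rightarrow> bool list \<Rightarrow> complex"
  where "vec_mult n w P v = (\<Sum>u\<in>basis_states n. w u * P u v)"

lemma vec_mult_row: "vec_mult n (P s) Q = mat_mult n P Q s"
  by (simp add: vec_mult_def mat_mult_def fun_eq_iff)

lemma vec_mult_mat_mult: "vec_mult n (vec_mult n w P) Q = vec_mult n w (mat_mult n P Q)"
  using mat_mult_assoc[of n "\<lambda>_. w" P Q] by (simp add: vec_mult_row[symmetric] fun_eq_iff)

lemma vec_mult_linear:
  assumes "finite K"
  shows "vec_mult n (\<lambda>u. a * w u - (\<Sum>k\<in>K. c k * w' k u)) P v
       = a * vec_mult n w P v - (\<Sum>k\<in>K. c k * vec_mult n (w' k) P v)"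
proof -
  have "(\<Sum>u\<in>basis_states n. \<Sum>k\<in>K. c k * (w' k u * P u v)) = (\<Sum>k\<in>K. \<Sum>u\<in>basis_states n. c k * (w' k u * P u v))"
    by (rule sum.swap)
  then show ?thesis
    unfolding vec_mult_def
    by (simp add: left_diff_distrib sum_subtractf sum_distrib_left sum_distrib_right mult.assoc)
qed

lemma vec_B_A_exchange:
  assumes "wb (z - y) \<noteq> 0"
  shows "vec_mult n (vec_mult n w (Bop g mu n y)) (Aop g mu n z) t
    = wa g (z-y) / wb (z-y) * vec_mult n (vec_mult n w (Aop g mu n z)) (Bop g mu n y) t
    - wc g (z-y) / wb (z-y) * vec_mult n (vec_mult n w (Aop g mu n y)) (Bop g mu n z) t"
  unfolding vec_mult_mat_mult vec_mult_def B_A_exchange[OF assms]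
  by (simp add: sum_subtractf sum_distrib_left mult.left_commute right_diff_distrib)

lemma Bprod_Nil: "Bprod g mu L [] = (\<lambda>s s'. if s = s' then 1 else 0)"
  by (simp add: fun_eq_iff)

lemma Bprod_Cons: "Bprod g mu L (y # ys) = mat_mult L (Bop g mu L y) (Bprod g mu L ys)"
  by (simp add: mat_mult_def basis_states_def fun_eq_iff)

lemma Bprod_snoc: "Bprod g mu L (ys @ [y]) = mat_mult L (Bprod g mu L ys) (Bop g mu L y)"
proof (induction ys)
  case Nil
  have "Bop g mu L y s s' = 0" if "length s \<noteq> L \<or> length s' \<noteq> L" for s s'
    using that mono_nonzero_length[of g mu y L False True s s'] by (auto simp: Bop_def)
  then show ?case
    by (auto simp: Bprod_Cons Bprod_Nil fun_eq_iff mat_mult_delta_left mat_mult_delta_right)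
qed (simp add: Bprod_Cons mat_mult_assoc)

lemma Bprod_swap: "Bprod g mu L (a # b # ys) = Bprod g mu L (b # a # ys)"
proof -
  have "mat_mult L (Bop g mu L a) (Bop g mu L b) = mat_mult L (Bop g mu L b) (Bop g mu L a)"
    by (intro ext B_commute)
  then show ?thesis
    by (metis Bprod_Cons mat_mult_assoc)
qed

lemma Bprod_move: "Bprod g mu L (ys @ y # zs) = Bprod g mu L (y # ys @ zs)"
proof (induction ys)
  case (Cons a ys)
  then show ?case by (metis Bprod_Cons Bprod_swap append_Cons)
qed simp

lemma Bprod_perm: "mset ys = mset zs \<Longrightarrow> Bprod g mu L ys = Bprod g mu L zs"
proof (induction ys arbitrary: zs)
  case (Cons y ys)
  then obtain zs1 zs2 where zs: "zs = zs1 @ y # zs2"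
    by (metis list.set_intros(1) set_mset_mset split_list)
  with Cons.prems have "mset ys = mset (zs1 @ zs2)" by simp
  then have "Bprod g mu L ys = Bprod g mu L (zs1 @ zs2)" by (rule Cons.IH)
  then show ?case
    unfolding zs Bprod_move by (simp add: Bprod_Cons)
qed simp

text \<open>The row vector \<open>\<langle>0\<^sup>*| \<Prod>\<^sub>k\<^sub>\<in>\<^sub>S B(x\<^sub>k)\<close>; by \<open>Bprod_perm\<close> the order of the factors is irrelevant.\<close>
definition bra_B :: "complex \<Rightarrow> (nat \<Rightarrow> complex) \<Rightarrow> nat \<Rightarrow> (nat \<Rightarrow> complex) \<Rightarrow> nat set \<Rightarrow> bool list \<Rightarrow> complex"
  where "bra_B g mu L x S = Bprod g mu L (map x (sorted_list_of_set S)) (replicate L True)"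

lemma Bprod_eq_bra_B:
  "distinct js \<Longrightarrow> Bprod g mu L (map x js) (replicate L True) = bra_B g mu L x (set js)"
  unfolding bra_B_def
  by (rule Bprod_perm[THEN fun_cong]) (simp add: sorted_list_of_set_sort_remdups distinct_remdups_id)

lemma bra_B_empty: "bra_B g mu L x {} = (\<lambda>t. if t = replicate L True then 1 else 0)"
  by (auto simp: bra_B_def)

lemma bra_B_insert:
  assumes "finite S" "j \<notin> S"
  shows "bra_B g mu L x (insert j S) = vec_mult L (bra_B g mu L x S) (Bop g mu L (x j))"
proof -
  have "bra_B g mu L x (insert j S) = Bprod g mu L (map x (sorted_list_of_set S @ [j])) (replicate L True)"
    using assms by (subst Bprod_eq_bra_B) auto
  then show ?thesis
    by (simp add: Bprod_snoc vec_mult_row bra_B_def)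
qed

lemma Aop_vacuum:
  "Aop g mu n z t (replicate n False) = (if t = replicate n False then \<Prod>k=1..n. wa g (z - mu k) else 0)"
proof (induction n arbitrary: t)
  case (Suc n)
  show ?case
  proof (cases t rule: rev_exhaust)
    case (snoc t' c)
    then show ?thesis
      by (cases c) (auto simp: UNIV_bool Rmat_def Suc.IH prod.nat_ivl_Suc' mult.commute
          simp flip: replicate_append_same)
  qed simp
qed simp

lemma dual_vacuum_Aop:
  "Aop g mu n z (replicate n True) t = (if t = replicate n True then \<Prod>k=1..n. wb (z - mu k) else 0)"
proof (induction n arbitrary: t)
  case (Suc n)
  show ?case
  proof (cases t rule: rev_exhaust)
    case (snoc t' c)
    then show ?thesis
      by (cases c) (auto simp: UNIV_bool Rmat_def Suc.IH prod.nat_ivl_Suc' mult.commute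
          simp flip: replicate_append_same)
  qed simp
qed simp

text \<open>Coefficient of the wanted term \<open>\<langle>0\<^sup>*| \<Prod>\<^sub>k\<^sub>\<in>\<^sub>S B(x\<^sub>k)\<close> when \<open>A(x\<^sub>p)\<close> is moved through the \<open>B\<close>'s.\<close>
definition wanted_coeff :: "complex \<Rightarrow> (nat \<Rightarrow> complex) \<Rightarrow> nat \<Rightarrow> (nat \<Rightarrow> complex) \<Rightarrow> nat \<Rightarrow> nat set \<Rightarrow> complex"
  where "wanted_coeff g mu L x p S =
    (\<Prod>l\<in>S. wa g (x p - x l) / wb (x p - x l)) * (\<Prod>k=1..L. wb (x p - mu k))"

lemma wanted_coeff_insert:
  "finite S \<Longrightarrow> j \<notin> S \<Longrightarrow>
    wanted_coeff g mu L x p (insert j S) = wa g (x p - x j) / wb (x p - x j) * wanted_coeff g mu L x p S"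
  by (simp add: wanted_coeff_def)

lemma sinh_three_term: "sinh (u - v + g) * sinh (v - w) + sinh (w - v + g) * sinh (u - v) = sinh g * sinh (u - (w::complex))"
proof -
  have "exp u \<noteq> 0" "exp v \<noteq> 0" "exp g \<noteq> 0" "exp w \<noteq> 0" by auto
  then show ?thesis
    by (simp add: sinh_eq_exp exp_add exp_diff field_simps)
qed

lemma weight_ratio_identity:
  assumes "wb (u - v) \<noteq> 0" "wb (v - w) \<noteq> 0" "wb (u - w) \<noteq> 0"
  shows "wa g (u-v) / wb (u-v) * (wc g (u-w) / wb (u-w)) - wc g (u-v) / wb (u-v) * (wc g (v-w) / wb (v-w))
       = wc g (u-w) / wb (u-w) * (wa g (w-v) / wb (w-v))"
proof -
  have "wb (w - v) = - wb (v - w)"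
    unfolding wb_def by (metis minus_diff_eq sinh_minus)
  moreover have "sinh g * sinh (u - w) = sinh (u - v + g) * sinh (v - w) + sinh (w - v + g) * sinh (u - v)"
    by (simp add: sinh_three_term)
  ultimately show ?thesis
    using assms unfolding wa_def wb_def wc_def by (simp add: field_simps)
qed

text \<open>Induction on \<open>S\<close>: one application of \<open>B_A_exchange\<close> moves \<open>A\<close> past the last \<open>B\<close>, and
  \<open>weight_ratio_identity\<close> merges the unwanted terms of the two resulting induction instances.\<close>
lemma bra_B_A:
  assumes "finite S" "j0 \<notin> S"
    and "\<And>p q. p \<in> insert j0 S \<Longrightarrow> q \<in> insert j0 S \<Longrightarrow> p \<noteq> q \<Longrightarrow> wb (x p - x q) \<noteq> 0"
  shows "vec_mult L (bra_B g mu L x S) (Aop g mu L (x j0)) t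
       = wanted_coeff g mu L x j0 S * bra_B g mu L x S t
       - (\<Sum>k\<in>S. wc g (x j0 - x k) / wb (x j0 - x k) * wanted_coeff g mu L x k (S - {k})
                    * bra_B g mu L x (insert j0 (S - {k})) t)"
  using assms
proof (induction S arbitrary: j0 t rule: finite_induct)
  case empty
  have "vec_mult L (bra_B g mu L x {}) (Aop g mu L (x j0)) t = Aop g mu L (x j0) (replicate L True) t"
    unfolding vec_mult_def bra_B_empty
    by (simp add: if_distrib[of "\<lambda>c. c * _"] sum.delta' cong: if_cong) (simp add: basis_states_def)
  then show ?case
    by (simp add: dual_vacuum_Aop bra_B_empty wanted_coeff_def)
next
  case (insert j S)
  let ?v = "bra_B g mu L x" and ?w = "wanted_coeff g mu L x"
  define al where "al p q = wa g (x p - x q) / wb (x p - x q)" for p q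
  define be where "be p q = wc g (x p - x q) / wb (x p - x q)" for p q
  have j0: "j0 \<noteq> j" "j0 \<notin> S"
    using insert.prems(1) by auto
  have IH: "vec_mult L (?v S) (Aop g mu L (x i)) = (\<lambda>u. ?w i S * ?v S u
      - (\<Sum>k\<in>S. be i k * ?w k (S - {k}) * ?v (insert i (S - {k})) u))" if "i \<in> {j0, j}" for i
    using insert.IH[of i] insert.hyps j0 insert.prems(2) that by (auto simp: be_def)
  have B_step: "vec_mult L (?v T) (Bop g mu L (x i)) = ?v (insert i T)" if "finite T" "i \<notin> T" for i T
    using bra_B_insert[OF that] by simp
  have combine: "al j0 j * be j0 k - be j0 j * be j k = be j0 k * al k j" if "k \<in> S" for k
    unfolding al_def be_def
    by (rule weight_ratio_identity) (use insert.prems(2) insert.hyps j0 that in auto)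
  have sum_combine: "al j0 j * (\<Sum>k\<in>S. be j0 k * X k) - be j0 j * (\<Sum>k\<in>S. be j k * X k)
      = (\<Sum>k\<in>S. be j0 k * al k j * X k)" for X :: "nat \<Rightarrow> complex"
    unfolding sum_distrib_left sum_subtractf[symmetric]
  proof (rule sum.cong[OF refl])
    fix k assume "k \<in> S"
    have "al j0 j * (be j0 k * X k) - be j0 j * (be j k * X k) = (al j0 j * be j0 k - be j0 j * be j k) * X k"
      by (simp add: algebra_simps)
    then show "al j0 j * (be j0 k * X k) - be j0 j * (be j k * X k) = be j0 k * al k j * X k"
      by (simp add: combine[OF \<open>k \<in> S\<close>])
  qed
  have "vec_mult L (?v (insert j S)) (Aop g mu L (x j0)) t
      = al j0 j * vec_mult L (vec_mult L (?v S) (Aop g mu L (x j0))) (Bop g mu L (x j)) t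
      - be j0 j * vec_mult L (vec_mult L (?v S) (Aop g mu L (x j))) (Bop g mu L (x j0)) t"
    unfolding bra_B_insert[OF insert.hyps] al_def be_def
    by (rule vec_B_A_exchange) (use insert.prems(2) j0 in auto)
  also have "\<dots> = al j0 j * (?w j0 S * ?v (insert j S) t
        - (\<Sum>k\<in>S. be j0 k * ?w k (S - {k}) * ?v (insert j0 (insert j (S - {k}))) t))
      - be j0 j * (?w j S * ?v (insert j0 S) t
        - (\<Sum>k\<in>S. be j k * ?w k (S - {k}) * ?v (insert j0 (insert j (S - {k}))) t))"
    using insert.hyps j0 by (simp add: IH vec_mult_linear B_step insert_commute)
  also have "\<dots> = al j0 j * ?w j0 S * ?v (insert j S) t
      - (be j0 j * ?w j S * ?v (insert j0 S) t
        + (\<Sum>k\<in>S. be j0 k * (al k j * ?w k (S - {k})) * ?v (insert j0 (insert j (S - {k}))) t))"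
    using sum_combine[of "\<lambda>k. ?w k (S - {k}) * ?v (insert j0 (insert j (S - {k}))) t"]
    by (simp add: algebra_simps)
  also have "\<dots> = ?w j0 (insert j S) * ?v (insert j S) t
      - (\<Sum>k\<in>insert j S. be j0 k * ?w k (insert j S - {k}) * ?v (insert j0 (insert j S - {k})) t)"
  proof -
    have "be j0 k * ?w k (insert j S - {k}) * ?v (insert j0 (insert j S - {k})) t
        = be j0 k * (al k j * ?w k (S - {k})) * ?v (insert j0 (insert j (S - {k}))) t" if "k \<in> S" for k
    proof -
      have "insert j S - {k} = insert j (S - {k})"
        using that insert.hyps by auto
      then show ?thesis
        using insert.hyps by (simp add: wanted_coeff_insert al_def)
    qed
    moreover have "insert j S - {j} = S"
      using insert.hyps by auto
    ultimately show ?thesis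
      using insert.hyps by (simp add: wanted_coeff_insert al_def)
  qed
  finally show ?case
    by (simp add: be_def)
qed

lemma vec_mult_Aop_vacuum:
  "vec_mult n w (Aop g mu n z) (replicate n False) = (\<Prod>k=1..n. wa g (z - mu k)) * w (replicate n False)"
  unfolding vec_mult_def Aop_vacuum
  by (simp add: if_distrib[of "(*) _"] sum.delta cong: if_cong) (simp add: basis_states_def)

lemma Zdw_update_eq_bra_B:
  assumes "i \<le> L"
  shows "Zdw g mu L (map (x(i := x 0)) [1..<L+1]) = bra_B g mu L x ({0..L} - {i}) (replicate L False)"
proof -
  define js where "js = map ((\<lambda>k. k)(i := 0)) [1..<L+1]"
  have "map (x(i := x 0)) [1..<L+1] = map x js"
    by (simp add: js_def)
  moreover have "distinct js"
    by (auto simp: js_def distinct_map inj_on_def)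
  moreover have "set js = {0..L} - {i}"
    using assms by (auto simp: js_def image_iff)
  ultimately show ?thesis
    by (simp add: Zdw_def Bprod_eq_bra_B)
qed

lemma rho_diag:
  "rho g mu L x m m = (\<Prod>k=1..L. wa g (x m - mu k)) - wanted_coeff g mu L x m ({0..L} - {m})"
  by (cases "m = 0") (simp_all add: rho_def wanted_coeff_def mult.commute)

lemma rho_off_diag:
  assumes "i \<noteq> m"
  shows "rho g mu L x m i = wc g (x m - x i) / wb (x m - x i) * wanted_coeff g mu L x i ({0..L} - {m} - {i})"
proof -
  have "{1..L} - {m} = {0..L} - {m} - {0}" "{0..L} - {i, m} = {0..L} - {m} - {i}"
    by auto
  with assms show ?thesis
    by (cases "i = 0") (simp_all add: rho_def wanted_coeff_def mult_ac)
qed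

theorem corollary6p3:
  fixes g :: complex and mu x :: "nat \<Rightarrow> complex" and L m :: nat
  assumes "L \<ge> 1"
    and generic: "\<And>i j. i \<le> L \<Longrightarrow> j \<le> L \<Longrightarrow> i \<noteq> j \<Longrightarrow> wb (x i - x j) \<noteq> 0"
    and "m \<le> L"
  shows "(\<Sum>i=0..L. rho g mu L x m i * Zdw g mu L (map (x(i := x 0)) [1..<L+1])) = 0"
proof -
  define S where "S = {0..L} - {m}"
  define Z where "Z i = bra_B g mu L x ({0..L} - {i}) (replicate L False)" for i
  have "(\<Prod>k=1..L. wa g (x m - mu k)) * Z m
      = vec_mult L (bra_B g mu L x S) (Aop g mu L (x m)) (replicate L False)"
    by (simp add: vec_mult_Aop_vacuum Z_def S_def)
  also have "\<dots> = wanted_coeff g mu L x m S * Z m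
      - (\<Sum>k\<in>S. wc g (x m - x k) / wb (x m - x k) * wanted_coeff g mu L x k (S - {k})
          * bra_B g mu L x (insert m (S - {k})) (replicate L False))"
    unfolding Z_def S_def by (rule bra_B_A) (use generic \<open>m \<le> L\<close> in auto)
  also have "(\<Sum>k\<in>S. wc g (x m - x k) / wb (x m - x k) * wanted_coeff g mu L x k (S - {k})
          * bra_B g mu L x (insert m (S - {k})) (replicate L False))
      = (\<Sum>k\<in>S. wc g (x m - x k) / wb (x m - x k) * wanted_coeff g mu L x k (S - {k}) * Z k)"
  proof (rule sum.cong[OF refl])
    fix k assume "k \<in> S"
    then have "insert m (S - {k}) = {0..L} - {k}"
      using \<open>m \<le> L\<close> by (auto simp: S_def)
    then show "wc g (x m - x k) / wb (x m - x k) * wanted_coeff g mu L x k (S - {k})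
          * bra_B g mu L x (insert m (S - {k})) (replicate L False)
      = wc g (x m - x k) / wb (x m - x k) * wanted_coeff g mu L x k (S - {k}) * Z k"
      by (simp only: Z_def)
  qed
  finally have eigen: "(\<Prod>k=1..L. wa g (x m - mu k)) * Z m = wanted_coeff g mu L x m S * Z m
      - (\<Sum>k\<in>S. wc g (x m - x k) / wb (x m - x k) * wanted_coeff g mu L x k (S - {k}) * Z k)" .
  have "(\<Sum>i=0..L. rho g mu L x m i * Zdw g mu L (map (x(i := x 0)) [1..<L+1]))
      = (\<Sum>i=0..L. rho g mu L x m i * Z i)"
    by (rule sum.cong[OF refl]) (simp only: atLeastAtMost_iff Zdw_update_eq_bra_B Z_def)
  also have "\<dots> = rho g mu L x m m * Z m + (\<Sum>i\<in>S. rho g mu L x m i * Z i)"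
    using \<open>m \<le> L\<close> unfolding S_def by (subst sum.remove[of _ m]) auto
  also have "(\<Sum>i\<in>S. rho g mu L x m i * Z i)
      = (\<Sum>k\<in>S. wc g (x m - x k) / wb (x m - x k) * wanted_coeff g mu L x k (S - {k}) * Z k)"
    by (rule sum.cong) (simp_all add: rho_off_diag S_def)
  also have "rho g mu L x m m * Z m + \<dots> = 0"
    using eigen by (simp add: rho_diag S_def algebra_simps)
  finally show ?thesis .
qed

end
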